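(* Let $\lambda>0$. For a Yule tree with rate $\lambda$ grown for time $t\ge 0$ from an initial bifurcation (the number of leaves being random), let $I(t)$ and $P(t)$ be the expected sums of the interior and pendant edge lengths respectively. Then $$I(t)=\frac{1}{\lambda}\bigl(e^{\lambda t}+e^{-\lambda t}-2\bigr),\qquad P(t)=\frac{1}{\lambda}\bigl(e^{\lambda t}-e^{-\lambda t}\bigr).$$ Consequently, defining $p(t)=P(t)/(2e^{\lambda t})$ and $i(t)=I(t)/(2e^{\lambda t}-2)$ for $t>0$ (the average pendant and interior edge lengths when the number of leaves takes its expected value $2e^{\lambda t}$), the ratio $p(t)/i(t)$ converges to $1$ exponentially fast as $t\to\infty$: there exist constants $C,c>0$ with $|p(t)/i(t)-1|\le Ce^{-ct}$ for all $t>0$. *)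

theory Defs
  imports "HOL-Probability.Probability"
begin

text \<open>The process is generated by its jump chain:
  in a state with k lineages the waiting time to the next split is Exp(k*lam), and the
  splitting lineage is chosen uniformly among the k lineages.  The randomness is an i.i.d.
  sequence of pairs (E_n, U_n) with E_n ~ Exp(1) and U_n ~ Uniform[0,1]; the waiting time is
  E_n/(k*lam) and the chosen lineage has index floor(U_n * k).

  A state is (current time T, list of birth times of alive lineages, accumulated
  interior edge length).\<close>

type_synonym yule_state = "real \<times> real list \<times> real"

definition yule_step :: "real \<Rightarrow> real \<times> real \<Rightarrow> yule_state \<Rightarrow> yule_state" where
  "yule_step lam eu s =
     (case s of (T, bs, acc) \<Rightarrow>
       let k = length bs;
           w = fst eu / (lam * real k);
           i = min (k - 1) (nat \<lfloor>snd eu * real k\<rfloor>);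
           T' = T + w;
           b = bs ! i
       in (T', take i bs @ drop (Suc i) bs @ [T', T'], acc + (T' - b)))"

primrec yule_chain :: "real \<Rightarrow> (nat \<Rightarrow> real \<times> real) \<Rightarrow> nat \<Rightarrow> yule_state" where
  "yule_chain lam \<omega> 0 = (0, [0, 0], 0)"
| "yule_chain lam \<omega> (Suc n) = yule_step lam (\<omega> n) (yule_chain lam \<omega> n)"

text \<open>The state of the tree at time t: the state after the last split not later than t.
  (If the jump times never exceed t -- an event of probability zero -- we put 0.)\<close>

definition yule_at :: "real \<Rightarrow> (nat \<Rightarrow> real \<times> real) \<Rightarrow> real \<Rightarrow> yule_state" where
  "yule_at lam \<omega> t = yule_chain lam \<omega> (LEAST n. t < fst (yule_chain lam \<omega> (Suc n)))"

definition yule_defined :: "real \<Rightarrow> (nat \<Rightarrow> real \<times> real) \<Rightarrow> real \<Rightarrow> bool" where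
  "yule_defined lam \<omega> t \<longleftrightarrow> (\<exists>n. t < fst (yule_chain lam \<omega> (Suc n)))"

text \<open>Sum of pendant edge lengths at time t: each alive lineage is a pendant edge from its
  birth time up to t.\<close>

definition pendant_sum :: "real \<Rightarrow> (nat \<Rightarrow> real \<times> real) \<Rightarrow> real \<Rightarrow> real" where
  "pendant_sum lam \<omega> t =
     (if yule_defined lam \<omega> t
      then sum_list (map (\<lambda>b. t - b) (fst (snd (yule_at lam \<omega> t)))) else 0)"

definition interior_sum :: "real \<Rightarrow> (nat \<Rightarrow> real \<times> real) \<Rightarrow> real \<Rightarrow> real" where
  "interior_sum lam \<omega> t =
     (if yule_defined lam \<omega> t then snd (snd (yule_at lam \<omega> t)) else 0)"

definition yule_base :: "(real \<times> real) measure" where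
  "yule_base = density lborel (exponential_density 1) \<Otimes>\<^sub>M uniform_measure lborel {0..1}"

definition yule_space :: "(nat \<Rightarrow> real \<times> real) measure" where
  "yule_space = PiM UNIV (\<lambda>_::nat. yule_base)"

definition yule_I :: "real \<Rightarrow> real \<Rightarrow> real" where
  "yule_I lam t = (\<integral>\<omega>. interior_sum lam \<omega> t \<partial>yule_space)"

definition yule_P :: "real \<Rightarrow> real \<Rightarrow> real" where
  "yule_P lam t = (\<integral>\<omega>. pendant_sum lam \<omega> t \<partial>yule_space)"

definition yule_p :: "real \<Rightarrow> real \<Rightarrow> real" where
  "yule_p lam t = yule_P lam t / (2 * exp (lam * t))"

definition yule_i :: "real \<Rightarrow> real \<Rightarrow> real" where
  "yule_i lam t = yule_I lam t / (2 * exp (lam * t) - 2)"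

end

theory Submission
  imports Defs "HOL-Real_Asymp.Real_Asymp"
begin

(* For a state s = (T, bs, acc) of the jump chain (time T, birth times bs of the k living
   lineages, accumulated interior length acc) the total age A(s), the sum of T - b over b in bs,
   is the pendant length at time T.  Fix functions a, b and a constant c0 >= 0 solving
       a' = b + lam a,   b' = lam (c0 - b),   a 0 = 0,
   and put  V s = k a(t - T) + b(t - T) A(s) + c0 acc.  The central fact is that V s is the
   expected value, for the tree started in s, of
       X = b 0 * (pendant length at time t) + c0 * (interior length at time t).
   It is proved in three steps: (1) a one-step identity -- averaging V over the exponential
   waiting time and the uniformly chosen splitting lineage reproduces V (the ODEs are exactly what
   makes this work); (2) telescoping it over n steps; (3) the remainder vanishes because the n-th
   jump time satisfies E[exp(-2 lam T_n)] = 6 / ((n + 2) (n + 3)).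
   The choices (a, b, c0) = ((cosh (lam u) - 1) / lam, 1 - exp (- lam u), 1) and
   (sinh (lam u) / lam, exp (- lam u), 0) turn X into the interior and the pendant length, and
   V of the initial bifurcation is 2 a(t); this gives I(t) and P(t), and the ratio estimate is
   then elementary algebra (p / i = 1 + exp (- lam t)). *)

primrec chain_from ::
  "(real \<times> real \<Rightarrow> real \<times> real) \<Rightarrow> real \<Rightarrow> yule_state \<Rightarrow> (nat \<Rightarrow> real \<times> real) \<Rightarrow> nat \<Rightarrow> yule_state"
where
  "chain_from g lam s \<omega> 0 = s"
| "chain_from g lam s \<omega> (Suc n) = yule_step lam (g (\<omega> n)) (chain_from g lam s \<omega> n)"

lemma chain_from_case_nat:
  "chain_from g lam s (case_nat x \<omega>) (Suc n) = chain_from g lam (yule_step lam (g x) s) \<omega> n"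
  by (induction n) auto

definition initial_state :: yule_state where
  "initial_state = (0, [0, 0], 0)"

lemma yule_chain_eq_chain_from: "yule_chain lam \<omega> n = chain_from id lam initial_state \<omega> n"
  by (induction n) (auto simp: initial_state_def)

(* Clamping the exponential variable to be nonnegative; it is almost surely the identity. *)
definition clamp_wait :: "real \<times> real \<Rightarrow> real \<times> real" where
  "clamp_wait x = (max 0 (fst x), snd x)"

definition split_at :: "real \<Rightarrow> nat \<Rightarrow> yule_state \<Rightarrow> yule_state" where
  "split_at T' i s = (case s of (T, bs, acc) \<Rightarrow>
     (T', take i bs @ drop (Suc i) bs @ [T', T'], acc + (T' - bs ! i)))"

definition split_index :: "nat \<Rightarrow> real \<Rightarrow> nat" where
  "split_index k u = min (k - 1) (nat \<lfloor>u * real k\<rfloor>)"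

lemma split_index_less: "0 < k \<Longrightarrow> split_index k u < k"
  by (simp add: split_index_def min_less_iff_disj)

lemma yule_step_split_at:
  "yule_step lam x s = split_at (fst s + fst x / (lam * real (length (fst (snd s)))))
                         (split_index (length (fst (snd s))) (snd x)) s"
  by (cases s) (simp add: yule_step_def split_at_def split_index_def Let_def)

lemma split_at_simps [simp]:
  "fst (split_at T' i s) = T'"
  "snd (snd (split_at T' i (T, bs, acc))) = acc + (T' - bs ! i)"
  "i < length bs \<Longrightarrow> length (fst (snd (split_at T' i (T, bs, acc)))) = Suc (length bs)"
  by (cases s, simp_all add: split_at_def)+

lemma nth_split_at:
  assumes "i < length bs" "j < Suc (length bs)"
  shows "fst (snd (split_at T' i (T, bs, acc))) ! j =
           (if j < i then bs ! j else if j < length bs - 1 then bs ! Suc j else T')"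
proof -
  consider "j < i" | "i \<le> j" "j < length bs - 1" | "length bs - 1 \<le> j" by linarith
  then show ?thesis
  proof cases
    case 3
    then have "j - i - (length bs - Suc i) = 0 \<or> j - i - (length bs - Suc i) = 1"
      using assms by linarith
    then show ?thesis using assms 3 by (auto simp: split_at_def nth_append min_def)
  qed (use assms in \<open>auto simp: split_at_def nth_append min_def\<close>)
qed

definition state_measurable :: "'a measure \<Rightarrow> nat \<Rightarrow> ('a \<Rightarrow> yule_state) \<Rightarrow> bool" where
  "state_measurable M L sf \<longleftrightarrow> (\<forall>\<omega>. length (fst (snd (sf \<omega>))) = L)
     \<and> (\<lambda>\<omega>. fst (sf \<omega>)) \<in> borel_measurable M \<and> (\<lambda>\<omega>. snd (snd (sf \<omega>))) \<in> borel_measurable M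
     \<and> (\<forall>j<L. (\<lambda>\<omega>. fst (snd (sf \<omega>)) ! j) \<in> borel_measurable M)"

(* A split at a measurable time of a measurably chosen lineage. The chosen birth time is
   measurable because the index ranges over a countable set. *)
lemma state_measurable_split_at:
  assumes sf: "state_measurable M L sf" and L: "0 < L"
    and [measurable]: "T' \<in> borel_measurable M" "i \<in> measurable M (count_space UNIV)"
    and i_less: "\<And>\<omega>. i \<omega> < L"
  shows "state_measurable M (Suc L) (\<lambda>\<omega>. split_at (T' \<omega>) (i \<omega>) (sf \<omega>))"
proof -
  obtain T bs acc where sf_eq: "\<And>\<omega>. sf \<omega> = (T \<omega>, bs \<omega>, acc \<omega>)"
    by (rule that[of "\<lambda>\<omega>. fst (sf \<omega>)" "\<lambda>\<omega>. fst (snd (sf \<omega>))" "\<lambda>\<omega>. snd (snd (sf \<omega>))"]) simp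
  have len: "length (bs \<omega>) = L" for \<omega> using sf by (simp add: state_measurable_def sf_eq)
  have acc [measurable]: "acc \<in> borel_measurable M" using sf by (simp add: state_measurable_def sf_eq)
  have birth_min [measurable]: "(\<lambda>\<omega>. bs \<omega> ! min j (L - 1)) \<in> borel_measurable M" for j
    using sf L by (simp add: state_measurable_def sf_eq)
  have "(\<lambda>\<omega>. bs \<omega> ! min (i \<omega>) (L - 1)) \<in> borel_measurable M"
    by (rule measurable_compose_countable'[where f="\<lambda>j \<omega>. bs \<omega> ! min j (L - 1)" and g=i and I=UNIV],
        rule birth_min) simp_all
  moreover have "min (i \<omega>) (L - 1) = i \<omega>" for \<omega> using i_less[of \<omega>] by simp
  ultimately have chosen [measurable]: "(\<lambda>\<omega>. bs \<omega> ! i \<omega>) \<in> borel_measurable M" by simp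
  have births: "(\<lambda>\<omega>. fst (snd (split_at (T' \<omega>) (i \<omega>) (sf \<omega>))) ! j) \<in> borel_measurable M"
    if j: "j < Suc L" for j
  proof -
    have "fst (snd (split_at (T' \<omega>) (i \<omega>) (sf \<omega>))) ! j =
        (if j < i \<omega> then bs \<omega> ! min j (L - 1) else if j < L - 1 then bs \<omega> ! min (Suc j) (L - 1)
         else T' \<omega>)" for \<omega>
      using nth_split_at[of "i \<omega>" "bs \<omega>" j] i_less[of \<omega>] len[of \<omega>] j by (auto simp: sf_eq)
    moreover have "(\<lambda>\<omega>. if j < i \<omega> then bs \<omega> ! min j (L - 1)
        else if j < L - 1 then bs \<omega> ! min (Suc j) (L - 1) else T' \<omega>) \<in> borel_measurable M"
      by measurable
    ultimately show ?thesis by simp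
  qed
  have "(\<lambda>\<omega>. acc \<omega> + (T' \<omega> - bs \<omega> ! i \<omega>)) \<in> borel_measurable M" by measurable
  then show ?thesis
    unfolding state_measurable_def using births i_less len by (simp add: sf_eq)
qed

lemma state_measurable_step:
  assumes sf: "state_measurable M L sf" and L: "0 < L"
    and [measurable]: "(\<lambda>\<omega>. fst (x \<omega>)) \<in> borel_measurable M" "(\<lambda>\<omega>. snd (x \<omega>)) \<in> borel_measurable M"
  shows "state_measurable M (Suc L) (\<lambda>\<omega>. yule_step lam (x \<omega>) (sf \<omega>))"
proof -
  have [measurable]: "(\<lambda>\<omega>. fst (sf \<omega>)) \<in> borel_measurable M"
    using sf by (simp add: state_measurable_def)
  have "length (fst (snd (sf \<omega>))) = L" for \<omega> using sf by (simp add: state_measurable_def)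
  then have "yule_step lam (x \<omega>) (sf \<omega>) =
      split_at (fst (sf \<omega>) + fst (x \<omega>) / (lam * real L)) (split_index L (snd (x \<omega>))) (sf \<omega>)" for \<omega>
    by (simp add: yule_step_split_at)
  moreover have "state_measurable M (Suc L) (\<lambda>\<omega>.
      split_at (fst (sf \<omega>) + fst (x \<omega>) / (lam * real L)) (split_index L (snd (x \<omega>))) (sf \<omega>))"
  proof (rule state_measurable_split_at[OF sf L])
    show "(\<lambda>\<omega>. split_index L (snd (x \<omega>))) \<in> measurable M (count_space UNIV)"
      unfolding split_index_def by measurable
  qed (simp_all add: L split_index_less)
  ultimately show ?thesis by simp
qed

lemma state_measurable_chain_from:
  assumes "fst (snd s) \<noteq> []"
    and "\<And>n. (\<lambda>\<omega>. fst (g (sf \<omega> n))) \<in> borel_measurable M"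
      "\<And>n. (\<lambda>\<omega>. snd (g (sf \<omega> n))) \<in> borel_measurable M"
  shows "state_measurable M (length (fst (snd s)) + n) (\<lambda>\<omega>. chain_from g lam s (sf \<omega>) n)"
proof (induction n)
  case 0
  then show ?case by (simp add: state_measurable_def)
next
  case (Suc n)
  then show ?case
    using state_measurable_step[OF Suc _ assms(2,3)] assms(1) by simp
qed

definition total_age :: "yule_state \<Rightarrow> real" where
  "total_age s = sum_list (map (\<lambda>b. fst s - b) (fst (snd s)))"

lemma total_age_sum: "total_age (T, bs, acc) = (\<Sum>i<length bs. T - bs ! i)"
  by (simp add: total_age_def sum_list_sum_nth atLeast0LessThan)

lemma measurable_total_age:
  assumes "state_measurable M L sf"
  shows "(\<lambda>\<omega>. total_age (sf \<omega>)) \<in> borel_measurable M"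
proof -
  have "total_age (sf \<omega>) = (\<Sum>j<L. fst (sf \<omega>) - fst (snd (sf \<omega>)) ! j)" for \<omega>
    using assms total_age_sum[of "fst (sf \<omega>)" "fst (snd (sf \<omega>))" "snd (snd (sf \<omega>))"]
    by (simp add: state_measurable_def)
  then show ?thesis
    using assms by (auto simp: state_measurable_def intro!: borel_measurable_sum borel_measurable_diff)
qed

lemma total_age_shift: "total_age (T', bs, acc) = total_age (T, bs, acc') + real (length bs) * (T' - T)"
  unfolding total_age_def by (induction bs) (simp_all add: algebra_simps)

lemma sum_list_remove_nth:
  assumes "i < length xs"
  shows "sum_list (map f xs) = sum_list (map f (take i xs)) + f (xs ! i) + sum_list (map f (drop (Suc i) xs))"
proof -
  have "sum_list (map f xs) = sum_list (map f (take (Suc i) xs @ drop (Suc i) xs))" by simp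
  also have "\<dots> = sum_list (map f (take i xs)) + f (xs ! i) + sum_list (map f (drop (Suc i) xs))"
    by (simp add: take_Suc_conv_app_nth[OF assms] add.assoc)
  finally show ?thesis .
qed

(* A split at T' removes the age of the split lineage; the two newborn lineages have age 0. *)
lemma total_age_split_at:
  assumes "i < length bs"
  shows "total_age (split_at T' i (T, bs, acc)) = total_age (T', bs, acc) - (T' - bs ! i)"
  using sum_list_remove_nth[OF assms, of "\<lambda>b. T' - b"] by (simp add: total_age_def split_at_def)

lemma prob_space_yule_base: "prob_space yule_base"
  unfolding yule_base_def
  by (intro prob_space_pair prob_space_exponential_density prob_space_uniform_measure) auto

interpretation YB: sequence_space yule_base
  by (simp add: sequence_space_def product_prob_space_def product_prob_space_axioms_def
      product_sigma_finite_def prob_space_yule_base prob_space_imp_sigma_finite)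

lemma sets_yule_base [measurable_cong]: "sets yule_base = sets (borel \<Otimes>\<^sub>M borel)"
  unfolding yule_base_def by (intro sets_pair_measure_cong) auto

lemma emeasure_space_yule_space: "emeasure yule_space (space yule_space) = 1"
  using YB.P.emeasure_space_1 by (simp add: yule_space_def)

lemma nn_integral_yule_base:
  assumes "f \<in> borel_measurable yule_base"
  shows "(\<integral>\<^sup>+x. f x \<partial>yule_base) =
    (\<integral>\<^sup>+e. \<integral>\<^sup>+u. f (e, u) \<partial>uniform_measure lborel {0..1} \<partial>density lborel (exponential_density 1))"
proof -
  interpret U: prob_space "uniform_measure lborel {0..1::real}"
    by (rule prob_space_uniform_measure) auto
  show ?thesis
    using assms unfolding yule_base_def by (rule U.nn_integral_fst[symmetric])
qed

lemma nn_integral_yule_space_shift: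
  assumes f [measurable]: "f \<in> borel_measurable yule_space"
  shows "(\<integral>\<^sup>+\<omega>. f \<omega> \<partial>yule_space) = (\<integral>\<^sup>+x. (\<integral>\<^sup>+\<omega>. f (case_nat x \<omega>) \<partial>yule_space) \<partial>yule_base)"
proof -
  interpret P: pair_sigma_finite yule_base YB.S ..
  have [measurable]: "f \<in> borel_measurable YB.S" using f by (simp add: yule_space_def)
  have m: "(\<lambda>X. f (case_nat (fst X) (snd X))) \<in> borel_measurable (yule_base \<Otimes>\<^sub>M YB.S)"
    by measurable
  have "(\<integral>\<^sup>+\<omega>. f \<omega> \<partial>yule_space) = (\<integral>\<^sup>+X. f ((\<lambda>(s, \<omega>). case_nat s \<omega>) X) \<partial>(yule_base \<Otimes>\<^sub>M YB.S))"
    unfolding yule_space_def by (subst YB.PiM_iter[symmetric]) (simp add: nn_integral_distr)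
  also have "\<dots> = (\<integral>\<^sup>+x. \<integral>\<^sup>+X. f (case_nat x X) \<partial>YB.S \<partial>yule_base)"
    using YB.P.nn_integral_fst[OF m] by (simp add: split_beta')
  finally show ?thesis by (simp add: yule_space_def)
qed

lemma measurable_driving_pair:
  "(\<lambda>\<omega>. fst (clamp_wait (\<omega> n))) \<in> borel_measurable yule_space"
  "(\<lambda>\<omega>. snd (clamp_wait (\<omega> n))) \<in> borel_measurable yule_space"
  "(\<lambda>\<omega>. fst (id (\<omega> n))) \<in> borel_measurable yule_space"
  "(\<lambda>\<omega>. snd (id (\<omega> n))) \<in> borel_measurable yule_space"
  unfolding clamp_wait_def yule_space_def id_def by measurable

(* Valid states: nonempty, birth times in [0, T], interior length between 0 and k T. These are
   the invariants of the clamped chain that make all quantities below nonnegative and bounded. *)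
definition valid_state :: "yule_state \<Rightarrow> bool" where
  "valid_state s \<longleftrightarrow> fst (snd s) \<noteq> [] \<and> 0 \<le> fst s \<and> (\<forall>b\<in>set (fst (snd s)). 0 \<le> b \<and> b \<le> fst s)
     \<and> 0 \<le> snd (snd s) \<and> snd (snd s) \<le> real (length (fst (snd s))) * fst s"

lemma valid_initial: "valid_state initial_state"
  by (simp add: valid_state_def initial_state_def)

lemma valid_split_at:
  assumes valid: "valid_state (T, bs, acc)" and i: "i < length bs" and T': "T \<le> T'"
  shows "valid_state (split_at T' i (T, bs, acc))"
proof -
  have births: "\<And>b. b \<in> set bs \<Longrightarrow> 0 \<le> b \<and> b \<le> T" and "0 \<le> T"
    and acc: "0 \<le> acc" "acc \<le> real (length bs) * T"
    using valid by (auto simp: valid_state_def)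
  have chosen: "0 \<le> bs ! i" "bs ! i \<le> T" using births[OF nth_mem[OF i]] by auto
  have "set (take i bs @ drop (Suc i) bs @ [T', T']) \<subseteq> set bs \<union> {T'}"
    using set_take_subset set_drop_subset by fastforce
  then have new_births: "\<And>b. b \<in> set (take i bs @ drop (Suc i) bs @ [T', T']) \<Longrightarrow> 0 \<le> b \<and> b \<le> T'"
    using births \<open>0 \<le> T\<close> T' by force
  have "real (length bs) * T \<le> real (length bs) * T'" using T' by (simp add: mult_left_mono)
  then have "acc + (T' - bs ! i) \<le> real (Suc (length bs)) * T'"
    using acc chosen T' by (simp add: algebra_simps)
  then show ?thesis
    using new_births acc chosen T' \<open>0 \<le> T\<close> i by (simp add: valid_state_def split_at_def)
qed

abbreviation clamped_chain :: "real \<Rightarrow> yule_state \<Rightarrow> (nat \<Rightarrow> real \<times> real) \<Rightarrow> nat \<Rightarrow> yule_state" where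
  "clamped_chain lam s \<omega> n \<equiv> chain_from clamp_wait lam s \<omega> n"

lemma clamped_step:
  "yule_step lam (clamp_wait x) s = split_at (fst s + max 0 (fst x) / (lam * real (length (fst (snd s)))))
     (split_index (length (fst (snd s))) (snd x)) s"
  by (simp add: yule_step_split_at clamp_wait_def)

lemma valid_clamped_step:
  assumes "valid_state s" "0 < lam"
  shows "valid_state (yule_step lam (clamp_wait x) s)" "fst s \<le> fst (yule_step lam (clamp_wait x) s)"
proof -
  obtain T bs acc where s: "s = (T, bs, acc)" by (cases s)
  have "bs \<noteq> []" using assms(1) s by (simp add: valid_state_def)
  then show "valid_state (yule_step lam (clamp_wait x) s)"
    using assms by (auto simp: s clamped_step intro!: valid_split_at split_index_less)
  show "fst s \<le> fst (yule_step lam (clamp_wait x) s)"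
    using assms(2) by (simp add: s clamped_step)
qed

lemma valid_clamped_chain: "valid_state s \<Longrightarrow> 0 < lam \<Longrightarrow> valid_state (clamped_chain lam s \<omega> n)"
  by (induction n) (auto intro: valid_clamped_step)

lemma clamped_chain_time_mono:
  assumes "valid_state s" "0 < lam" "m \<le> n"
  shows "fst (clamped_chain lam s \<omega> m) \<le> fst (clamped_chain lam s \<omega> n)"
  using assms(3)
proof (induction n)
  case (Suc n)
  show ?case
  proof (cases "m = Suc n")
    case False
    then have "fst (clamped_chain lam s \<omega> m) \<le> fst (clamped_chain lam s \<omega> n)" using Suc by simp
    also have "\<dots> \<le> fst (clamped_chain lam s \<omega> (Suc n))"
      using valid_clamped_step(2)[OF valid_clamped_chain[OF assms(1,2)] assms(2)] by simp
    finally show ?thesis .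
  qed simp
qed simp

lemma length_clamped_chain:
  assumes "valid_state s" "0 < lam"
  shows "length (fst (snd (clamped_chain lam s \<omega> n))) = length (fst (snd s)) + n"
proof (induction n)
  case (Suc n)
  obtain T bs acc where c: "clamped_chain lam s \<omega> n = (T, bs, acc)" by (cases "clamped_chain lam s \<omega> n")
  have "bs \<noteq> []" using valid_clamped_chain[OF assms, of \<omega> n] by (simp add: c valid_state_def)
  then have "length (fst (snd (clamped_chain lam s \<omega> (Suc n)))) = Suc (length bs)"
    using split_index_less[of "length bs"] by (simp add: c clamped_step)
  then show ?case using Suc.IH by (simp add: c)
qed simp

lemma state_measurable_clamped_chain:
  assumes "valid_state s"
  shows "state_measurable yule_space (length (fst (snd s)) + n) (\<lambda>\<omega>. clamped_chain lam s \<omega> n)"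
  using state_measurable_chain_from[where sf = "\<lambda>\<omega>. \<omega>", OF _ measurable_driving_pair(1,2)] assms
  by (simp add: valid_state_def)

lemma total_age_nonneg: "valid_state s \<Longrightarrow> 0 \<le> total_age s"
  unfolding total_age_def valid_state_def by (auto intro!: sum_list_nonneg)

lemma total_age_le: "valid_state s \<Longrightarrow> total_age s \<le> real (length (fst (snd s))) * fst s"
proof -
  assume "valid_state s"
  then have "\<forall>b\<in>set (fst (snd s)). fst s - b \<le> fst s" by (auto simp: valid_state_def)
  then have "total_age s \<le> sum_list (map (\<lambda>b. fst s) (fst (snd s)))"
    unfolding total_age_def by (intro sum_list_mono) auto
  also have "\<dots> = real (length (fst (snd s))) * fst s" by (simp add: sum_list_triv)
  finally show ?thesis .
qed

lemma split_index_indicator: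
  assumes k: "0 < k" and i: "i < k" and u: "0 \<le> u" "u < 1"
  shows "u \<in> {real i / real k ..< real (Suc i) / real k} \<longleftrightarrow> i = split_index k u"
proof -
  have "u * real k < real k" using k u by simp
  then have floor_less: "nat \<lfloor>u * real k\<rfloor> < k" using u by (simp add: nat_less_iff floor_less_iff)
  have "u \<in> {real i / real k ..< real (Suc i) / real k} \<longleftrightarrow> real i \<le> u * real k \<and> u * real k < real i + 1"
    using k by (simp add: field_simps)
  also have "\<dots> \<longleftrightarrow> \<lfloor>u * real k\<rfloor> = int i" by (simp add: floor_eq_iff)
  also have "\<dots> \<longleftrightarrow> i = nat \<lfloor>u * real k\<rfloor>" using u by auto
  finally show ?thesis using floor_less by (simp add: split_index_def)
qed

lemma split_index_as_sum:
  fixes F :: "nat \<Rightarrow> ennreal"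
  assumes k: "0 < k" and u: "u \<noteq> 1"
  shows "F (split_index k u) * indicator {0..1} u =
           (\<Sum>i<k. F i * indicator {real i / real k ..< real (Suc i) / real k} u)"
proof (cases "0 \<le> u \<and> u < 1")
  case True
  have "(\<Sum>i<k. F i * indicator {real i / real k ..< real (Suc i) / real k} u) =
      (\<Sum>i<k. if i = split_index k u then F i else 0)"
    using split_index_indicator[OF k _ conjunct1[OF True] conjunct2[OF True]]
    by (intro sum.cong) (auto simp: indicator_def)
  also have "\<dots> = F (split_index k u)" using split_index_less[OF k] by simp
  finally show ?thesis using True by simp
next
  case False
  then have outside: "u < 0 \<or> 1 < u" using u by auto
  have not_in: "u \<notin> {real i / real k ..< real (Suc i) / real k}" if "i < k" for i
  proof -
    have bounds: "0 \<le> real i / real k" "real (Suc i) / real k \<le> 1"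
      using that k by (simp_all add: field_simps)
    show ?thesis unfolding atLeastLessThan_iff using outside bounds by linarith
  qed
  then have "(\<Sum>i<k. F i * indicator {real i / real k ..< real (Suc i) / real k} u) = 0"
    by (intro sum.neutral) simp
  moreover have "indicator {0..1} u = (0::ennreal)" using outside by (auto simp: indicator_def)
  ultimately show ?thesis by simp
qed

lemma nn_integral_uniform_split_index:
  fixes F :: "nat \<Rightarrow> ennreal"
  assumes k: "0 < k"
  shows "(\<integral>\<^sup>+u. F (split_index k u) \<partial>uniform_measure lborel {0..1::real}) = (\<Sum>i<k. F i) / of_nat k"
proof -
  have [measurable]: "(\<lambda>u::real. F (split_index k u)) \<in> borel_measurable borel"
    unfolding split_index_def by measurable
  have "(\<integral>\<^sup>+u. F (split_index k u) \<partial>uniform_measure lborel {0..1::real})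
      = (\<integral>\<^sup>+u. F (split_index k u) * indicator {0..1} u \<partial>lborel)"
    by (subst nn_integral_uniform_measure) (auto simp: divide_ennreal_def)
  also have "\<dots> = (\<integral>\<^sup>+u. (\<Sum>i<k. F i * indicator {real i / real k ..< real (Suc i) / real k} u) \<partial>lborel)"
    using AE_lborel_singleton[of "1::real"]
    by (intro nn_integral_cong_AE) (auto elim!: eventually_mono simp: split_index_as_sum[OF k])
  also have "\<dots> = (\<Sum>i<k. F i * ennreal (1 / real k))"
    using k by (subst nn_integral_sum) (auto intro!: sum.cong simp: nn_integral_cmult_indicator field_simps)
  also have "\<dots> = (\<Sum>i<k. F i) / of_nat k"
    using k by (simp add: sum_distrib_right[symmetric] divide_ennreal_def
        ennreal_of_nat_eq_real_of_nat inverse_ennreal inverse_eq_divide)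
  finally show ?thesis .
qed

(* Fundamental theorem of calculus on [0, U] plus the tail. *)
lemma nn_integral_exponential_first_wait:
  fixes F H :: "real \<Rightarrow> real"
  assumes U: "0 \<le> U"
    and deriv: "\<And>x. 0 \<le> x \<Longrightarrow> x \<le> U \<Longrightarrow> (F has_real_derivative exp (-x) * H x) (at x)"
    and H_nonneg: "\<And>x. 0 \<le> x \<Longrightarrow> x \<le> U \<Longrightarrow> 0 \<le> H x"
    and [measurable]: "H \<in> borel_measurable borel"
    and Q: "0 \<le> Q" and F_U: "F U = - exp (-U) * Q" and F_0: "F 0 = - R"
  shows "(\<integral>\<^sup>+e. ennreal (if e \<le> U then H e else Q) \<partial>density lborel (exponential_density 1)) = ennreal R"
proof -
  have mono: "F 0 \<le> F U"
    by (rule deriv_nonneg_imp_mono[OF deriv]) (use U H_nonneg in auto)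
  have "(\<integral>\<^sup>+e. ennreal (if e \<le> U then H e else Q) \<partial>density lborel (exponential_density 1))
      = (\<integral>\<^sup>+e. ennreal (exponential_density 1 e) * ennreal (if e \<le> U then H e else Q) \<partial>lborel)"
    by (subst nn_integral_density) auto
  also have "\<dots> = (\<integral>\<^sup>+e. ennreal (exp (-e) * H e) * indicator {0..U} e
                       + ennreal (exp (-e) * Q) * indicator {U..} e \<partial>lborel)"
  proof (rule nn_integral_cong_AE)
    show "AE e in lborel. ennreal (exponential_density 1 e) * ennreal (if e \<le> U then H e else Q) =
       ennreal (exp (-e) * H e) * indicator {0..U} e + ennreal (exp (-e) * Q) * indicator {U..} e"
      using AE_lborel_singleton[of U]
    proof eventually_elim
      case (elim e)
      show ?case
      proof (cases "e < 0")
        case True then show ?thesis using U by (simp add: exponential_density_def indicator_def)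
      next
        case False
        then show ?thesis using elim U H_nonneg Q
          by (auto simp: exponential_density_def indicator_def ennreal_mult')
      qed
    qed
  qed
  also have "\<dots> = (\<integral>\<^sup>+e. ennreal (exp (-e) * H e) * indicator {0..U} e \<partial>lborel)
                 + (\<integral>\<^sup>+e. ennreal (exp (-e) * Q) * indicator {U..} e \<partial>lborel)"
    by (rule nn_integral_add) auto
  also have "(\<integral>\<^sup>+e. ennreal (exp (-e) * H e) * indicator {0..U} e \<partial>lborel) = ennreal (F U - F 0)"
    by (rule nn_integral_FTC_Icc) (use deriv H_nonneg U in auto)
  also have "(\<integral>\<^sup>+e. ennreal (exp (-e) * Q) * indicator {U..} e \<partial>lborel) = ennreal (0 - (- exp (-U) * Q))"
  proof (rule nn_integral_FTC_atLeast)
    show "((\<lambda>x. - exp (-x) * Q) \<longlongrightarrow> 0) at_top" by real_asymp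
  qed (auto intro!: derivative_eq_intros simp: Q)
  also have "ennreal (F U - F 0) + ennreal (0 - (- exp (-U) * Q)) = ennreal R"
    using mono Q F_U F_0 by (subst ennreal_plus[symmetric]) auto
  finally show ?thesis .
qed

lemma nn_integral_exponential_laplace:
  assumes r: "0 \<le> r"
  shows "(\<integral>\<^sup>+e. ennreal (exp (- (r * max 0 e))) \<partial>density lborel (exponential_density 1)) = ennreal (1 / (1 + r))"
proof -
  have "(\<integral>\<^sup>+e. ennreal (exp (- (r * max 0 e))) \<partial>density lborel (exponential_density 1))
      = (\<integral>\<^sup>+e. ennreal (exponential_density 1 e) * ennreal (exp (- (r * max 0 e))) \<partial>lborel)"
    by (subst nn_integral_density) auto
  also have "\<dots> = (\<integral>\<^sup>+e. ennreal (exp (- ((1 + r) * e))) * indicator {0..} e \<partial>lborel)"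
    by (rule nn_integral_cong) (auto simp: exponential_density_def indicator_def
        ennreal_mult'[symmetric] exp_add[symmetric] algebra_simps)
  also have "\<dots> = ennreal (0 - (- exp (- ((1 + r) * 0)) / (1 + r)))"
  proof (rule nn_integral_FTC_atLeast)
    show "((\<lambda>x. - exp (- ((1 + r) * x)) / (1 + r)) \<longlongrightarrow> 0) at_top"
      using r by real_asymp
    have nonzero: "1 + r \<noteq> 0" using r by simp
    have deriv: "((\<lambda>x. - exp (- ((1 + r) * x)) / (1 + r)) has_real_derivative
        - (exp (- ((1 + r) * x)) * (- (1 + r))) / (1 + r)) (at x)" for x
      using nonzero by (auto intro!: derivative_eq_intros)
    have simplified: "- (exp (- ((1 + r) * x)) * (- (1 + r))) / (1 + r) = exp (- ((1 + r) * x))" for x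
      using nonzero by (simp add: field_simps)
    show "((\<lambda>x. - exp (- ((1 + r) * x)) / (1 + r)) has_real_derivative exp (- ((1 + r) * x))) (at x)" for x
      using deriv[of x] unfolding simplified .
  qed auto
  finally show ?thesis by simp
qed

(* The setting of the main argument: a, b solve the ODEs from the introduction; V s is the
   predicted and X s the realised value of b 0 * (pendant length) + c0 * (interior length) at
   the horizon t, for the tree in state s. *)
locale yule_ode =
  fixes lam t c0 :: real and a b da db :: "real \<Rightarrow> real"
  assumes lam_pos: "0 < lam" and t_nonneg: "0 \<le> t" and c0_nonneg: "0 \<le> c0"
    and deriv_a: "\<And>u. (a has_real_derivative da u) (at u)"
    and deriv_b: "\<And>u. (b has_real_derivative db u) (at u)"
    and ode_a: "\<And>u. da u = b u + lam * a u"
    and ode_b: "\<And>u. db u = lam * (c0 - b u)"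
    and a_zero: "a 0 = 0"
    and a_nonneg: "\<And>u. 0 \<le> u \<Longrightarrow> 0 \<le> a u" and b_nonneg: "\<And>u. 0 \<le> u \<Longrightarrow> 0 \<le> b u"
begin

definition V :: "yule_state \<Rightarrow> real" where
  "V s = real (length (fst (snd s))) * a (t - fst s) + b (t - fst s) * total_age s + c0 * snd (snd s)"

definition X :: "yule_state \<Rightarrow> real" where
  "X s = b 0 * total_age (t, fst (snd s), snd (snd s)) + c0 * snd (snd s)"

lemma V_at_horizon: "V (t, bs, acc) = X (T, bs, acc)"
  by (simp add: V_def X_def a_zero)

lemma continuous_a: "continuous_on A a"
  by (intro continuous_at_imp_continuous_on ballI DERIV_isCont[OF deriv_a])

lemma continuous_b: "continuous_on A b"
  by (intro continuous_at_imp_continuous_on ballI DERIV_isCont[OF deriv_b])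

lemma measurable_a [measurable]: "a \<in> borel_measurable borel"
  by (rule borel_measurable_continuous_onI[OF continuous_a])

lemma measurable_b [measurable]: "b \<in> borel_measurable borel"
  by (rule borel_measurable_continuous_onI[OF continuous_b])

lemma deriv_a_chain [derivative_intros]:
  "(g has_real_derivative g') (at x within S) \<Longrightarrow> ((\<lambda>x. a (g x)) has_real_derivative da (g x) * g') (at x within S)"
  by (rule DERIV_chain2[OF deriv_a])

lemma deriv_b_chain [derivative_intros]:
  "(g has_real_derivative g') (at x within S) \<Longrightarrow> ((\<lambda>x. b (g x)) has_real_derivative db (g x) * g') (at x within S)"
  by (rule DERIV_chain2[OF deriv_b])

lemma measurable_V_X:
  assumes sf: "state_measurable M L sf"
  shows "(\<lambda>\<omega>. V (sf \<omega>)) \<in> borel_measurable M" "(\<lambda>\<omega>. X (sf \<omega>)) \<in> borel_measurable M"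
proof -
  have len: "length (fst (snd (sf \<omega>))) = L" for \<omega> using sf by (simp add: state_measurable_def)
  have T: "(\<lambda>\<omega>. fst (sf \<omega>)) \<in> borel_measurable M" and acc: "(\<lambda>\<omega>. snd (snd (sf \<omega>))) \<in> borel_measurable M"
    using sf by (simp_all add: state_measurable_def)
  have "state_measurable M L (\<lambda>\<omega>. (t, fst (snd (sf \<omega>)), snd (snd (sf \<omega>))))"
    using sf by (simp add: state_measurable_def)
  note ages = measurable_total_age[OF sf] measurable_total_age[OF this]
  have remaining: "(\<lambda>\<omega>. t - fst (sf \<omega>)) \<in> borel_measurable M" using T by simp
  show "(\<lambda>\<omega>. V (sf \<omega>)) \<in> borel_measurable M"
    unfolding V_def len using remaining ages(1) acc
    by (intro borel_measurable_add borel_measurable_times borel_measurable_const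
        measurable_compose[OF remaining measurable_a] measurable_compose[OF remaining measurable_b])
  show "(\<lambda>\<omega>. X (sf \<omega>)) \<in> borel_measurable M"
    unfolding X_def using ages(2) acc by simp
qed

lemma V_nonneg: "valid_state s \<Longrightarrow> fst s \<le> t \<Longrightarrow> 0 \<le> V s"
  unfolding V_def using a_nonneg b_nonneg c0_nonneg total_age_nonneg[of s]
  by (auto simp: valid_state_def)

lemma X_nonneg:
  assumes "valid_state s" "fst s \<le> t"
  shows "0 \<le> X s"
proof -
  obtain T bs acc where s: "s = (T, bs, acc)" by (cases s)
  have "total_age (t, bs, acc) = total_age s + real (length bs) * (t - T)"
    using total_age_shift by (simp add: s)
  also have "0 \<le> \<dots>" using total_age_nonneg[OF assms(1)] assms(2) by (simp add: s)
  finally show ?thesis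
    using assms b_nonneg[of 0] c0_nonneg by (simp add: X_def valid_state_def s)
qed

definition mean_split :: "real \<Rightarrow> yule_state \<Rightarrow> real" where
  "mean_split T' s = (\<Sum>i<length (fst (snd s)). V (split_at T' i s)) / real (length (fst (snd s)))"

lemma mean_split_nonneg:
  assumes "valid_state s" "fst s \<le> T'" "T' \<le> t"
  shows "0 \<le> mean_split T' s"
proof -
  obtain T bs acc where s: "s = (T, bs, acc)" by (cases s)
  have "0 \<le> V (split_at T' i s)" if "i < length bs" for i
    using valid_split_at[of T bs acc i T'] assms that by (intro V_nonneg) (simp_all add: s)
  then show ?thesis unfolding mean_split_def s by (auto intro!: divide_nonneg_nonneg sum_nonneg)
qed

lemma mean_split_eq:
  fixes T T' acc :: real and bs :: "real list"
  assumes "bs \<noteq> []"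
  defines "k \<equiv> length bs" and "A \<equiv> total_age (T', bs, acc)"
  shows "mean_split T' (T, bs, acc) =
           real (Suc k) * a (t - T') + b (t - T') * (A - A / real k) + c0 * (acc + A / real k)"
proof -
  have split: "V (split_at T' i (T, bs, acc)) = real (Suc k) * a (t - T') + b (t - T') * A + c0 * acc
                  + (c0 - b (t - T')) * (T' - bs ! i)" if "i < k" for i
    using that by (simp add: V_def total_age_split_at A_def k_def algebra_simps)
  have ages: "(\<Sum>i<k. T' - bs ! i) = A" by (simp add: A_def k_def total_age_sum)
  have "0 < k" using assms(1) by (simp add: k_def)
  have "mean_split T' (T, bs, acc) = (\<Sum>i<k. V (split_at T' i (T, bs, acc))) / real k"
    by (simp add: mean_split_def k_def)
  also have "\<dots> = (real k * (real (Suc k) * a (t - T') + b (t - T') * A + c0 * acc)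
                     + (c0 - b (t - T')) * A) / real k"
    by (simp add: split ages sum.distrib sum_distrib_left[symmetric])
  also have "\<dots> = real (Suc k) * a (t - T') + b (t - T') * (A - A / real k) + c0 * (acc + A / real k)"
    using \<open>0 < k\<close> by (simp add: field_simps)
  finally show ?thesis .
qed

(* This is where the ODEs for a and b are used. *)
lemma aged_value_deriv:
  fixes T acc :: real and bs :: "real list"
  assumes "bs \<noteq> []"
  defines "c \<equiv> lam * real (length bs)"
  shows "((\<lambda>x. - exp (-x) * V (T + x / c, bs, acc)) has_real_derivative
            exp (-x) * mean_split (T + x / c) (T, bs, acc)) (at x)"
proof -
  define k where "k = length bs"
  define A where "A x = total_age (T, bs, acc) + real k * (x / c)" for x
  have k: "0 < k" using assms(1) by (simp add: k_def)
  have c: "0 < c" using k lam_pos by (simp add: c_def k_def)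
  have age: "total_age (T + x / c, bs, acc) = A x" for x
    using total_age_shift[of "T + x / c" bs acc T acc] by (simp add: A_def k_def)
  have aged: "(\<lambda>x. - exp (-x) * V (T + x / c, bs, acc)) =
      (\<lambda>x. - exp (-x) * (real k * a (t - T - x / c) + b (t - T - x / c) * A x + c0 * acc))"
    by (simp add: V_def age k_def algebra_simps)
  have mean: "mean_split (T + x / c) (T, bs, acc) = real (Suc k) * a (t - T - x / c)
      + b (t - T - x / c) * (A x - A x / real k) + c0 * (acc + A x / real k)"
    using mean_split_eq[OF assms(1), of "T + x / c" T acc] by (simp add: age k_def algebra_simps)
  have "((\<lambda>x. - exp (-x) * (real k * a (t - T - x / c) + b (t - T - x / c) * A x + c0 * acc))
      has_real_derivative
        exp (-x) * (real k * a (t - T - x / c) + b (t - T - x / c) * A x + c0 * acc)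
        - exp (-x) * (real k * (da (t - T - x / c) * (- 1 / c)) + db (t - T - x / c) * (- 1 / c) * A x
                      + b (t - T - x / c) * (real k / c))) (at x)"
    unfolding A_def using c by (auto intro!: derivative_eq_intros simp: field_simps)
  moreover have "exp (-x) * (real k * a (t - T - x / c) + b (t - T - x / c) * A x + c0 * acc)
        - exp (-x) * (real k * (da (t - T - x / c) * (- 1 / c)) + db (t - T - x / c) * (- 1 / c) * A x
                      + b (t - T - x / c) * (real k / c))
      = exp (-x) * mean_split (T + x / c) (T, bs, acc)"
    unfolding mean ode_a ode_b using k lam_pos by (simp add: c_def k_def field_simps)
  ultimately show ?thesis unfolding aged by simp
qed

lemma state_measurable_first_step:
  assumes "valid_state s"
  shows "state_measurable yule_base (Suc (length (fst (snd s)))) (\<lambda>x. yule_step lam (clamp_wait x) s)"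
proof (rule state_measurable_step)
  show "state_measurable yule_base (length (fst (snd s))) (\<lambda>_. s)"
    by (simp add: state_measurable_def)
  show "0 < length (fst (snd s))" using assms by (simp add: valid_state_def)
qed (simp_all add: clamp_wait_def)

lemma average_over_split:
  fixes e :: real
  assumes valid: "valid_state s" and before: "fst s \<le> t"
  defines "T' \<equiv> fst s + max 0 e / (lam * real (length (fst (snd s))))"
  shows "(\<integral>\<^sup>+u. ennreal (if t < fst (yule_step lam (clamp_wait (e, u)) s) then X s
                   else V (yule_step lam (clamp_wait (e, u)) s)) \<partial>uniform_measure lborel {0..1})
      = ennreal (if t < T' then X s else mean_split T' s)"
proof -
  obtain T bs acc where s: "s = (T, bs, acc)" by (cases s)
  define k where "k = length bs"
  have k: "0 < k" using valid by (simp add: s k_def valid_state_def)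
  have T': "T \<le> T'" using lam_pos by (simp add: T'_def s)
  define f where "f i = (if t < T' then X s else V (split_at T' i s))" for i
  have f_nonneg: "0 \<le> f i" if "i < k" for i
    using X_nonneg[OF valid before] valid_split_at[of T bs acc i T'] valid that T'
    by (auto simp: f_def s k_def intro!: V_nonneg)
  have step: "yule_step lam (clamp_wait (e, u)) s = split_at T' (split_index k u) s" for u
    by (simp add: clamped_step s k_def T'_def)
  have "(\<integral>\<^sup>+u. ennreal (if t < fst (yule_step lam (clamp_wait (e, u)) s) then X s
                   else V (yule_step lam (clamp_wait (e, u)) s)) \<partial>uniform_measure lborel {0..1})
      = (\<integral>\<^sup>+u. ennreal (f (split_index k u)) \<partial>uniform_measure lborel {0..1})"
    unfolding step f_def by simp
  also have "\<dots> = (\<Sum>i<k. ennreal (f i)) / of_nat k"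
    by (rule nn_integral_uniform_split_index[OF k])
  also have "\<dots> = ennreal ((\<Sum>i<k. f i) / real k)"
  proof -
    have "(\<Sum>i<k. ennreal (f i)) = ennreal (\<Sum>i<k. f i)"
      by (rule sum_ennreal) (use f_nonneg in auto)
    moreover have "0 \<le> (\<Sum>i<k. f i)" using f_nonneg by (intro sum_nonneg) auto
    ultimately show ?thesis using k by (simp add: ennreal_of_nat_eq_real_of_nat divide_ennreal)
  qed
  also have "(\<Sum>i<k. f i) / real k = (if t < T' then X s else mean_split T' s)"
    using k by (simp add: f_def mean_split_def s k_def)
  finally show ?thesis .
qed

(* Averaging over the exponential waiting time: with splits at rate c = lam k, the split happens
   after the horizon iff e > U = c (t - T); below U the generator identity applies. *)
lemma average_over_wait:
  assumes valid: "valid_state s" and before: "fst s \<le> t"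
  defines "c \<equiv> lam * real (length (fst (snd s)))"
  shows "(\<integral>\<^sup>+e. ennreal (if t < fst s + max 0 e / c then X s else mean_split (fst s + max 0 e / c) s)
           \<partial>density lborel (exponential_density 1)) = ennreal (V s)"
proof -
  obtain T bs acc where s: "s = (T, bs, acc)" by (cases s)
  define k where "k = length bs"
  define U where "U = c * (t - T)"
  define H where "H x = mean_split (T + x / c) s" for x
  have k: "0 < k" using valid by (simp add: s k_def valid_state_def)
  have c: "0 < c" using k lam_pos by (simp add: c_def s k_def)
  have U: "0 \<le> U" using before c by (simp add: s U_def)
  have after: "t < T + x / c \<longleftrightarrow> U < x" for x using c by (simp add: U_def field_simps)
  have "AE e in density lborel (exponential_density 1). 0 \<le> e"
    by (subst AE_density) (auto simp: exponential_density_def intro!: AE_I2)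
  then have "(\<integral>\<^sup>+e. ennreal (if t < fst s + max 0 e / c then X s else mean_split (fst s + max 0 e / c) s)
           \<partial>density lborel (exponential_density 1))
      = (\<integral>\<^sup>+e. ennreal (if e \<le> U then H e else X s) \<partial>density lborel (exponential_density 1))"
    by (intro nn_integral_cong_AE)
       (auto elim!: eventually_mono simp: s H_def after)
  also have "\<dots> = ennreal (V s)"
  proof (rule nn_integral_exponential_first_wait[where F = "\<lambda>x. - exp (-x) * V (T + x / c, bs, acc)"])
    show "((\<lambda>x. - exp (-x) * V (T + x / c, bs, acc)) has_real_derivative exp (-x) * H x) (at x)" for x
      using aged_value_deriv[of bs T acc x] k by (simp add: H_def c_def k_def s)
    show "0 \<le> H x" if "0 \<le> x" "x \<le> U" for x
      using that c valid before by (auto simp: H_def U_def s field_simps intro!: mean_split_nonneg)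
    have "H = (\<lambda>x. real (Suc k) * a (t - (T + x / c))
        + b (t - (T + x / c)) * (total_age s + real k * (x / c) - (total_age s + real k * (x / c)) / real k)
        + c0 * (acc + (total_age s + real k * (x / c)) / real k))"
      unfolding fun_eq_iff
      using mean_split_eq[of bs "T + _ / c" T acc] total_age_shift[of "T + _ / c" bs acc T acc] k
      by (simp add: H_def s k_def)
    then show "H \<in> borel_measurable borel" by simp
    show "0 \<le> X s" by (rule X_nonneg[OF valid before])
    have "T + U / c = t" using c by (simp add: U_def)
    then show "- exp (-U) * V (T + U / c, bs, acc) = - exp (-U) * X s"
      by (simp add: V_at_horizon s)
  qed (simp_all add: U s)
  finally show ?thesis .
qed

lemma one_step_identity:
  assumes valid: "valid_state s" and before: "fst s \<le> t"
  shows "(\<integral>\<^sup>+x. ennreal (if t < fst (yule_step lam (clamp_wait x) s) then X s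
                        else V (yule_step lam (clamp_wait x) s)) \<partial>yule_base) = ennreal (V s)"
proof -
  note first = state_measurable_first_step[OF valid]
  note [measurable] = measurable_V_X(1)[OF first]
    first[unfolded state_measurable_def, THEN conjunct2, THEN conjunct1]
  show ?thesis
    by (subst nn_integral_yule_base)
       (simp_all add: average_over_split[OF valid before] average_over_wait[OF valid before])
qed

lemma measurable_clamped_chain:
  assumes "valid_state s"
  shows "(\<lambda>\<omega>. fst (clamped_chain lam s \<omega> n)) \<in> borel_measurable yule_space"
    "(\<lambda>\<omega>. V (clamped_chain lam s \<omega> n)) \<in> borel_measurable yule_space"
    "(\<lambda>\<omega>. X (clamped_chain lam s \<omega> n)) \<in> borel_measurable yule_space"
  using measurable_V_X[OF state_measurable_clamped_chain[OF assms]] state_measurable_clamped_chain[OF assms]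
  by (simp_all add: state_measurable_def)

definition stop_term :: "yule_state \<Rightarrow> (nat \<Rightarrow> real \<times> real) \<Rightarrow> nat \<Rightarrow> ennreal" where
  "stop_term s \<omega> j = ennreal (if fst (clamped_chain lam s \<omega> j) \<le> t \<and> t < fst (clamped_chain lam s \<omega> (Suc j))
                              then X (clamped_chain lam s \<omega> j) else 0)"

definition tail_term :: "yule_state \<Rightarrow> (nat \<Rightarrow> real \<times> real) \<Rightarrow> nat \<Rightarrow> ennreal" where
  "tail_term s \<omega> n = ennreal (if fst (clamped_chain lam s \<omega> n) \<le> t then V (clamped_chain lam s \<omega> n) else 0)"

definition truncation :: "nat \<Rightarrow> yule_state \<Rightarrow> (nat \<Rightarrow> real \<times> real) \<Rightarrow> ennreal" where
  "truncation n s \<omega> = (\<Sum>j<n. stop_term s \<omega> j) + tail_term s \<omega> n"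

lemma measurable_terms:
  assumes "valid_state s"
  shows "(\<lambda>\<omega>. stop_term s \<omega> j) \<in> borel_measurable yule_space"
    "(\<lambda>\<omega>. tail_term s \<omega> n) \<in> borel_measurable yule_space"
    "(\<lambda>\<omega>. truncation n s \<omega>) \<in> borel_measurable yule_space"
proof -
  note [measurable] = measurable_clamped_chain[OF assms]
  show stop: "(\<lambda>\<omega>. stop_term s \<omega> j) \<in> borel_measurable yule_space" for j
    unfolding stop_term_def by measurable
  show "(\<lambda>\<omega>. tail_term s \<omega> n) \<in> borel_measurable yule_space"
    unfolding tail_term_def by measurable
  then show "(\<lambda>\<omega>. truncation n s \<omega>) \<in> borel_measurable yule_space"
    unfolding truncation_def using stop by measurable
qed

lemma truncation_shift:
  assumes "fst s \<le> t"
  shows "truncation (Suc n) s (case_nat x \<omega>) =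
           ennreal (if t < fst (yule_step lam (clamp_wait x) s) then X s else 0)
           + truncation n (yule_step lam (clamp_wait x) s) \<omega>"
proof -
  have "truncation (Suc n) s (case_nat x \<omega>) = stop_term s (case_nat x \<omega>) 0
      + (\<Sum>j<n. stop_term s (case_nat x \<omega>) (Suc j)) + tail_term s (case_nat x \<omega>) (Suc n)"
    by (simp only: truncation_def sum.lessThan_Suc_shift)
  also have "stop_term s (case_nat x \<omega>) 0 = ennreal (if t < fst (yule_step lam (clamp_wait x) s) then X s else 0)"
    unfolding stop_term_def using assms by simp
  also have "(\<Sum>j<n. stop_term s (case_nat x \<omega>) (Suc j)) = (\<Sum>j<n. stop_term (yule_step lam (clamp_wait x) s) \<omega> j)"
    unfolding stop_term_def chain_from_case_nat by (simp del: chain_from.simps)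
  also have "tail_term s (case_nat x \<omega>) (Suc n) = tail_term (yule_step lam (clamp_wait x) s) \<omega> n"
    unfolding tail_term_def chain_from_case_nat by (simp del: chain_from.simps)
  finally show ?thesis by (simp add: truncation_def add.assoc)
qed

lemma truncation_after_horizon:
  assumes "valid_state s" "t < fst s"
  shows "truncation n s \<omega> = 0"
proof -
  have "\<not> fst (clamped_chain lam s \<omega> j) \<le> t" for j
    using clamped_chain_time_mono[OF assms(1) lam_pos, of 0 j \<omega>] assms(2) by simp
  then show ?thesis by (simp add: truncation_def stop_term_def tail_term_def)
qed

lemma integral_truncation:
  "valid_state s \<Longrightarrow> fst s \<le> t \<Longrightarrow> (\<integral>\<^sup>+\<omega>. truncation n s \<omega> \<partial>yule_space) = ennreal (V s)"
proof (induction n arbitrary: s)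
  case 0
  then show ?case by (simp add: truncation_def tail_term_def emeasure_space_yule_space)
next
  case (Suc n)
  have "(\<integral>\<^sup>+\<omega>. truncation (Suc n) s \<omega> \<partial>yule_space)
      = (\<integral>\<^sup>+x. (\<integral>\<^sup>+\<omega>. truncation (Suc n) s (case_nat x \<omega>) \<partial>yule_space) \<partial>yule_base)"
    by (rule nn_integral_yule_space_shift) (rule measurable_terms(3)[OF Suc.prems(1)])
  also have "\<dots> = (\<integral>\<^sup>+x. ennreal (if t < fst (yule_step lam (clamp_wait x) s) then X s
                                 else V (yule_step lam (clamp_wait x) s)) \<partial>yule_base)"
  proof (rule nn_integral_cong)
    fix x
    let ?s' = "yule_step lam (clamp_wait x) s"
    have valid': "valid_state ?s'" by (rule valid_clamped_step(1)[OF Suc.prems(1) lam_pos])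
    have "(\<integral>\<^sup>+\<omega>. truncation (Suc n) s (case_nat x \<omega>) \<partial>yule_space)
        = (\<integral>\<^sup>+\<omega>. ennreal (if t < fst ?s' then X s else 0) \<partial>yule_space) + (\<integral>\<^sup>+\<omega>. truncation n ?s' \<omega> \<partial>yule_space)"
      unfolding truncation_shift[OF Suc.prems(2)]
      by (rule nn_integral_add) (auto intro: measurable_terms(3)[OF valid'])
    also have "\<dots> = ennreal (if t < fst ?s' then X s else V ?s')"
      using Suc.IH[OF valid'] truncation_after_horizon[OF valid']
      by (auto simp: emeasure_space_yule_space)
    finally show "(\<integral>\<^sup>+\<omega>. truncation (Suc n) s (case_nat x \<omega>) \<partial>yule_space)
        = ennreal (if t < fst ?s' then X s else V ?s')" .
  qed
  also have "\<dots> = ennreal (V s)" by (rule one_step_identity[OF Suc.prems])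
  finally show ?case .
qed

end

(* The Laplace transform of the jump times.  From k lineages the waiting time is Exp(lam k), so
   each step contributes the factor E[exp(-2 lam W)] = k / (k + 2), and these multiply. *)
definition jump_factor :: "nat \<Rightarrow> nat \<Rightarrow> real" where
  "jump_factor k n = (\<Prod>j<n. real (k + j) / real (k + j + 2))"

lemma jump_factor_Suc: "jump_factor k (Suc n) = real k / real (k + 2) * jump_factor (Suc k) n"
  unfolding jump_factor_def by (subst prod.lessThan_Suc_shift) (simp add: add.commute add.left_commute)

lemma cancel_common_factor: "(x::real) \<noteq> 0 \<Longrightarrow> c / (x * y) * (x / z) = c / (y * z)"
  by (cases "y = 0"; cases "z = 0") (simp_all add: field_simps)

lemma jump_factor_closed:
  assumes "0 < k"
  shows "jump_factor k n = real k * real (k + 1) / (real (k + n) * real (k + n + 1))"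
proof (induction n)
  case (Suc n)
  have "jump_factor k (Suc n) = jump_factor k n * (real (k + n) / real (k + n + 2))"
    by (simp add: jump_factor_def)
  also have "\<dots> = real k * real (k + 1) / (real (k + n) * real (k + n + 1)) * (real (k + n) / real (k + n + 2))"
    using Suc by simp
  also have "\<dots> = real k * real (k + 1) / (real (k + Suc n) * real (k + Suc n + 1))"
    using assms by (subst cancel_common_factor) simp_all
  finally show ?case .
qed (use assms in \<open>simp add: jump_factor_def\<close>)

lemma laplace_first_wait:
  assumes "0 < k"
  shows "(\<integral>\<^sup>+x. ennreal (exp (- ((2 / real k) * max 0 (fst x)))) \<partial>yule_base) = ennreal (real k / real (k + 2))"
proof -
  interpret U: prob_space "uniform_measure lborel {0..1::real}"
    by (rule prob_space_uniform_measure) auto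
  have "(\<lambda>x. ennreal (exp (- ((2 / real k) * max 0 (fst x))))) \<in> borel_measurable yule_base"
    by measurable
  moreover have "emeasure (uniform_measure lborel {0..1::real}) UNIV = 1"
    using U.emeasure_space_1 by simp
  ultimately have "(\<integral>\<^sup>+x. ennreal (exp (- ((2 / real k) * max 0 (fst x)))) \<partial>yule_base)
      = (\<integral>\<^sup>+e. ennreal (exp (- ((2 / real k) * max 0 e))) \<partial>density lborel (exponential_density 1))"
    using nn_integral_yule_base[of "\<lambda>x. ennreal (exp (- ((2 / real k) * max 0 (fst x))))"] by simp
  also have "\<dots> = ennreal (real k / real (k + 2))"
    using assms by (subst nn_integral_exponential_laplace) (simp_all add: field_simps)
  finally show ?thesis .
qed

lemma laplace_jump_time:
  assumes lam: "0 < lam"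
  shows "valid_state s \<Longrightarrow> (\<integral>\<^sup>+\<omega>. ennreal (exp (- 2 * lam * fst (clamped_chain lam s \<omega> n))) \<partial>yule_space)
           = ennreal (exp (- 2 * lam * fst s) * jump_factor (length (fst (snd s))) n)"
proof (induction n arbitrary: s)
  case 0
  then show ?case by (simp add: jump_factor_def emeasure_space_yule_space)
next
  case (Suc n)
  define k where "k = length (fst (snd s))"
  have k: "0 < k" using Suc.prems by (simp add: valid_state_def k_def)
  have "(\<lambda>\<omega>. fst (clamped_chain lam s \<omega> (Suc n))) \<in> borel_measurable yule_space"
    using state_measurable_clamped_chain[OF Suc.prems, where n="Suc n"]
    unfolding state_measurable_def by blast
  then have "(\<lambda>\<omega>. ennreal (exp (- 2 * lam * fst (clamped_chain lam s \<omega> (Suc n))))) \<in> borel_measurable yule_space"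
    by measurable
  then have "(\<integral>\<^sup>+\<omega>. ennreal (exp (- 2 * lam * fst (clamped_chain lam s \<omega> (Suc n)))) \<partial>yule_space)
      = (\<integral>\<^sup>+x. (\<integral>\<^sup>+\<omega>. ennreal (exp (- 2 * lam * fst (clamped_chain lam s (case_nat x \<omega>) (Suc n))))
               \<partial>yule_space) \<partial>yule_base)"
    by (rule nn_integral_yule_space_shift)
  also have "\<dots> = (\<integral>\<^sup>+x. ennreal (exp (- 2 * lam * fst s) * jump_factor (Suc k) n)
                          * ennreal (exp (- ((2 / real k) * max 0 (fst x)))) \<partial>yule_base)"
  proof (rule nn_integral_cong)
    fix x
    let ?s' = "yule_step lam (clamp_wait x) s"
    have valid': "valid_state ?s'" by (rule valid_clamped_step(1)[OF Suc.prems lam])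
    have len: "length (fst (snd ?s')) = Suc k"
      using length_clamped_chain[OF Suc.prems lam, of _ 1] by (simp add: k_def)
    have "exp (- 2 * lam * fst ?s') = exp (- 2 * lam * fst s) * exp (- ((2 / real k) * max 0 (fst x)))"
      using lam by (simp add: clamped_step k_def exp_add[symmetric] field_simps)
    then show "(\<integral>\<^sup>+\<omega>. ennreal (exp (- 2 * lam * fst (clamped_chain lam s (case_nat x \<omega>) (Suc n)))) \<partial>yule_space)
        = ennreal (exp (- 2 * lam * fst s) * jump_factor (Suc k) n) * ennreal (exp (- ((2 / real k) * max 0 (fst x))))"
      unfolding chain_from_case_nat Suc.IH[OF valid'] len
      by (simp add: ennreal_mult'[symmetric] mult_ac)
  qed
  also have "\<dots> = ennreal (exp (- 2 * lam * fst s) * jump_factor (Suc k) n)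
                   * (\<integral>\<^sup>+x. ennreal (exp (- ((2 / real k) * max 0 (fst x)))) \<partial>yule_base)"
    by (rule nn_integral_cmult) measurable
  also have "\<dots> = ennreal (exp (- 2 * lam * fst s) * jump_factor (Suc k) n) * ennreal (real k / real (k + 2))"
    unfolding laplace_first_wait[OF k] ..
  also have "\<dots> = ennreal (exp (- 2 * lam * fst s) * jump_factor k (Suc n))"
  proof -
    have "exp (- 2 * lam * fst s) * jump_factor k (Suc n) =
        (exp (- 2 * lam * fst s) * jump_factor (Suc k) n) * (real k / real (k + 2))"
      by (simp add: jump_factor_Suc mult_ac)
    then show ?thesis by (simp only:) (rule ennreal_mult''[symmetric], simp)
  qed
  finally show ?case by (simp add: k_def)
qed

context yule_ode
begin

lemma value_bound:
  obtains C where "0 \<le> C" "\<And>s. valid_state s \<Longrightarrow> fst s \<le> t \<Longrightarrow> V s \<le> real (length (fst (snd s))) * C"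
proof -
  have "compact ((\<lambda>u. max (a u) (b u)) ` {0..t})"
    by (intro compact_continuous_image continuous_on_max continuous_a continuous_b compact_Icc)
  then have "bounded ((\<lambda>u. max (a u) (b u)) ` {0..t})" by (rule compact_imp_bounded)
  then obtain B where "\<forall>y \<in> (\<lambda>u. max (a u) (b u)) ` {0..t}. \<bar>y\<bar> \<le> B"
    unfolding bounded_real by blast
  then have B: "\<And>u. u \<in> {0..t} \<Longrightarrow> \<bar>max (a u) (b u)\<bar> \<le> B" by blast
  have bound: "a u \<le> B" "b u \<le> B" if "0 \<le> u" "u \<le> t" for u
    using B[of u] that by auto
  have "0 \<le> B" using B[of 0] t_nonneg by simp
  define C where "C = B + B * t + c0 * t"
  show ?thesis
  proof
    show "0 \<le> C" using \<open>0 \<le> B\<close> t_nonneg c0_nonneg by (simp add: C_def)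
    fix s assume valid: "valid_state s" and before: "fst s \<le> t"
    define k where "k = real (length (fst (snd s)))"
    define u where "u = t - fst s"
    have u: "0 \<le> u" "u \<le> t" using valid before by (auto simp: u_def valid_state_def)
    have kt: "k * fst s \<le> k * t" using before by (simp add: k_def mult_left_mono)
    have age: "0 \<le> total_age s" "total_age s \<le> k * t"
      using total_age_nonneg[OF valid] total_age_le[OF valid] kt by (auto simp: k_def)
    have "snd (snd s) \<le> k * fst s" using valid by (simp add: valid_state_def k_def)
    with kt have acc: "snd (snd s) \<le> k * t" by linarith
    have "V s = k * a u + b u * total_age s + c0 * snd (snd s)" by (simp add: V_def k_def u_def)
    also have "\<dots> \<le> k * B + B * (k * t) + c0 * (k * t)"
    proof (intro add_mono)
      show "k * a u \<le> k * B" using bound[OF u] by (simp add: k_def mult_left_mono)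
      show "b u * total_age s \<le> B * (k * t)"
        using bound[OF u] b_nonneg[OF u(1)] age by (intro mult_mono) auto
      show "c0 * snd (snd s) \<le> c0 * (k * t)" using c0_nonneg acc by (simp add: mult_left_mono)
    qed
    also have "\<dots> = real (length (fst (snd s))) * C" by (simp add: C_def k_def algebra_simps)
    finally show "V s \<le> real (length (fst (snd s))) * C" .
  qed
qed

(* The remainder after n steps: bounded via the Laplace transform of the n-th jump time. *)
lemma integral_tail_term_bound:
  assumes valid: "valid_state s" and C: "0 \<le> C"
    and V_le: "\<And>s. valid_state s \<Longrightarrow> fst s \<le> t \<Longrightarrow> V s \<le> real (length (fst (snd s))) * C"
  defines "k \<equiv> length (fst (snd s))"
  shows "(\<integral>\<^sup>+\<omega>. tail_term s \<omega> n \<partial>yule_space) \<le>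
     ennreal (C * real (k + n) * exp (2 * lam * t) * exp (- 2 * lam * fst s) * jump_factor k n)"
proof -
  define D where "D = C * real (k + n) * exp (2 * lam * t)"
  have D: "0 \<le> D" using C by (simp add: D_def)
  have "(\<integral>\<^sup>+\<omega>. tail_term s \<omega> n \<partial>yule_space)
      \<le> (\<integral>\<^sup>+\<omega>. ennreal D * ennreal (exp (- 2 * lam * fst (clamped_chain lam s \<omega> n))) \<partial>yule_space)"
  proof (rule nn_integral_mono)
    fix \<omega>
    let ?Tn = "fst (clamped_chain lam s \<omega> n)"
    show "tail_term s \<omega> n \<le> ennreal D * ennreal (exp (- 2 * lam * ?Tn))"
    proof (cases "?Tn \<le> t")
      case True
      have "V (clamped_chain lam s \<omega> n) \<le> real (k + n) * C"
        using V_le[OF valid_clamped_chain[OF valid lam_pos] True] length_clamped_chain[OF valid lam_pos]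
        by (simp add: k_def)
      also have "\<dots> \<le> real (k + n) * C * (exp (2 * lam * t) * exp (- 2 * lam * ?Tn))"
      proof -
        have "1 \<le> exp (2 * lam * t) * exp (- 2 * lam * ?Tn)"
          using True lam_pos by (simp add: exp_add[symmetric])
        moreover have "0 \<le> real (k + n) * C" using C by simp
        ultimately show ?thesis using mult_left_mono by fastforce
      qed
      also have "\<dots> = D * exp (- 2 * lam * ?Tn)" by (simp add: D_def mult_ac)
      finally show ?thesis using True D by (simp add: tail_term_def ennreal_mult'[symmetric])
    qed (simp add: tail_term_def)
  qed
  also have "\<dots> = ennreal D * (\<integral>\<^sup>+\<omega>. ennreal (exp (- 2 * lam * fst (clamped_chain lam s \<omega> n))) \<partial>yule_space)"
    by (rule nn_integral_cmult) (use measurable_clamped_chain(1)[OF valid, of n] in measurable)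
  also have "\<dots> = ennreal (D * (exp (- 2 * lam * fst s) * jump_factor k n))"
    unfolding laplace_jump_time[OF lam_pos valid] k_def using D by (simp add: ennreal_mult')
  finally show ?thesis by (simp add: D_def mult_ac)
qed

lemma tail_term_vanishes: "(\<lambda>n. \<integral>\<^sup>+\<omega>. tail_term initial_state \<omega> n \<partial>yule_space) \<longlonglongrightarrow> 0"
proof -
  obtain C where C: "0 \<le> C" "\<And>s. valid_state s \<Longrightarrow> fst s \<le> t \<Longrightarrow> V s \<le> real (length (fst (snd s))) * C"
    using value_bound by blast
  have bound: "(\<integral>\<^sup>+\<omega>. tail_term initial_state \<omega> n \<partial>yule_space) \<le> ennreal (6 * C * exp (2 * lam * t) / (real n + 3))"
    for n
  proof -
    have "jump_factor 2 n = 6 / (real (2 + n) * (real n + 3))"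
      using jump_factor_closed[of 2 n] by simp
    then have closed: "real (2 + n) * jump_factor 2 n = 6 / (real n + 3)"
      by (simp add: divide_simps mult_ac)
    have initial: "length (fst (snd initial_state)) = 2" "fst initial_state = 0"
      by (simp_all add: initial_state_def)
    have "C * real (2 + n) * exp (2 * lam * t) * exp (- 2 * lam * fst initial_state) * jump_factor 2 n
        = C * exp (2 * lam * t) * (real (2 + n) * jump_factor 2 n)"
      by (simp add: initial mult_ac)
    also have "\<dots> = 6 * C * exp (2 * lam * t) / (real n + 3)" unfolding closed by simp
    finally show ?thesis
      using integral_tail_term_bound[OF valid_initial C, of n, unfolded initial(1)] by simp
  qed
  have "(\<lambda>n. 6 * C * exp (2 * lam * t) / (real n + 3)) \<longlonglongrightarrow> 0" by real_asymp
  then have lim: "(\<lambda>n. ennreal (6 * C * exp (2 * lam * t) / (real n + 3))) \<longlonglongrightarrow> 0"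
    using tendsto_ennrealI by fastforce
  show ?thesis
    by (rule tendsto_sandwich[where f = "\<lambda>_. 0", OF _ _ tendsto_const lim]) (use bound in auto)
qed

lemma integral_stop_terms: "(\<integral>\<^sup>+\<omega>. (\<Sum>j. stop_term initial_state \<omega> j) \<partial>yule_space) = ennreal (V initial_state)"
proof -
  have valid: "valid_state initial_state" "fst initial_state \<le> t"
    using valid_initial t_nonneg by (simp_all add: initial_state_def)
  define I where "I j = (\<integral>\<^sup>+\<omega>. stop_term initial_state \<omega> j \<partial>yule_space)" for j
  note measurable = measurable_terms[OF valid(1)]
  have partial: "(\<Sum>j<n. I j) + (\<integral>\<^sup>+\<omega>. tail_term initial_state \<omega> n \<partial>yule_space) = ennreal (V initial_state)" for n
  proof -
    have "ennreal (V initial_state) = (\<integral>\<^sup>+\<omega>. truncation n initial_state \<omega> \<partial>yule_space)"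
      using integral_truncation[OF valid] by simp
    also have "\<dots> = (\<integral>\<^sup>+\<omega>. (\<Sum>j<n. stop_term initial_state \<omega> j) \<partial>yule_space)
                    + (\<integral>\<^sup>+\<omega>. tail_term initial_state \<omega> n \<partial>yule_space)"
      unfolding truncation_def by (rule nn_integral_add) (use measurable in auto)
    also have "(\<integral>\<^sup>+\<omega>. (\<Sum>j<n. stop_term initial_state \<omega> j) \<partial>yule_space) = (\<Sum>j<n. I j)"
      unfolding I_def by (rule nn_integral_sum) (use measurable in auto)
    finally show ?thesis by simp
  qed
  have "(\<lambda>n. (\<Sum>j<n. I j) + (\<integral>\<^sup>+\<omega>. tail_term initial_state \<omega> n \<partial>yule_space)) \<longlonglongrightarrow> suminf I + 0"
    by (intro tendsto_add summable_LIMSEQ summableI tail_term_vanishes)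
  then have "suminf I = ennreal (V initial_state)" unfolding partial by (simp add: LIMSEQ_const_iff)
  moreover have "(\<integral>\<^sup>+\<omega>. (\<Sum>j. stop_term initial_state \<omega> j) \<partial>yule_space) = suminf I"
    unfolding I_def by (rule nn_integral_suminf) (rule measurable(1))
  ultimately show ?thesis by simp
qed

end

definition nonneg_waits :: "(nat \<Rightarrow> real \<times> real) \<Rightarrow> bool" where
  "nonneg_waits \<omega> \<longleftrightarrow> (\<forall>n. 0 \<le> fst (\<omega> n))"

lemma AE_nonneg_waits: "AE \<omega> in yule_space. nonneg_waits \<omega>"
proof -
  have "AE x in yule_base. 0 \<le> fst x"
  proof -
    interpret U: prob_space "uniform_measure lborel {0..1::real}"
      by (rule prob_space_uniform_measure) auto
    interpret P: pair_sigma_finite "density lborel (exponential_density 1)" "uniform_measure lborel {0..1::real}"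
      by (intro pair_sigma_finite.intro prob_space_imp_sigma_finite prob_space_exponential_density
          U.prob_space_axioms) simp
    have "AE x in density lborel (exponential_density 1). 0 \<le> x"
      by (subst AE_density) (auto simp: exponential_density_def intro!: AE_I2)
    then have "AE x in density lborel (exponential_density 1). AE y in uniform_measure lborel {0..1::real}. 0 \<le> fst (x, y)"
      by eventually_elim simp
    then show ?thesis unfolding yule_base_def by (intro P.AE_pair_measure) measurable
  qed
  then have "\<And>n. AE \<omega> in yule_space. 0 \<le> fst (\<omega> n)"
    unfolding yule_space_def by (intro AE_PiM_component) (auto intro: prob_space_yule_base)
  then show ?thesis unfolding nonneg_waits_def by (subst AE_all_countable) auto
qed

lemma clamped_chain_eq_yule_chain:
  assumes "nonneg_waits \<omega>"
  shows "clamped_chain lam initial_state \<omega> n = yule_chain lam \<omega> n"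
proof -
  have "clamped_chain lam s \<omega> n = chain_from id lam s \<omega> n" for s
  proof (induction n)
    case (Suc n)
    have "clamp_wait (\<omega> n) = \<omega> n" using assms by (simp add: nonneg_waits_def clamp_wait_def)
    then show ?case using Suc by simp
  qed simp
  then show ?thesis by (simp add: yule_chain_eq_chain_from)
qed

lemma state_measurable_yule_chain: "state_measurable yule_space (2 + n) (\<lambda>\<omega>. yule_chain lam \<omega> n)"
  using state_measurable_chain_from[where sf = "\<lambda>\<omega>. \<omega>" and s = initial_state and lam = lam and n = n,
      OF _ measurable_driving_pair(3,4)]
  by (simp add: yule_chain_eq_chain_from initial_state_def id_def)

(* The state at time t is the m-th state, m the least index with t < T_(m+1); it satisfies
   T_m <= t because the jump chain starts at time 0. *)
lemma yule_at_bracket: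
  assumes "0 \<le> t" "yule_defined lam \<omega> t"
  shows "yule_at lam \<omega> t = yule_chain lam \<omega> (LEAST n. t < fst (yule_chain lam \<omega> (Suc n)))"
    and "fst (yule_at lam \<omega> t) \<le> t" "t < fst (yule_chain lam \<omega> (Suc (LEAST n. t < fst (yule_chain lam \<omega> (Suc n)))))"
proof -
  let ?P = "\<lambda>n. t < fst (yule_chain lam \<omega> (Suc n))"
  show at: "yule_at lam \<omega> t = yule_chain lam \<omega> (Least ?P)" by (simp add: yule_at_def)
  show "t < fst (yule_chain lam \<omega> (Suc (Least ?P)))"
    using assms(2) by (auto simp: yule_defined_def intro: LeastI_ex)
  show "fst (yule_at lam \<omega> t) \<le> t"
  proof (cases "Least ?P")
    case 0 then show ?thesis using assms(1) by (simp add: at)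
  next
    case (Suc m)
    then have "\<not> ?P m" using not_less_Least[of m ?P] by simp
    then show ?thesis using Suc by (simp add: at)
  qed
qed

lemma measurable_yule_sums:
  "(\<lambda>\<omega>. pendant_sum lam \<omega> t) \<in> borel_measurable yule_space"
  "(\<lambda>\<omega>. interior_sum lam \<omega> t) \<in> borel_measurable yule_space"
proof -
  note chain = state_measurable_yule_chain[unfolded state_measurable_def]
  have [measurable]: "(\<lambda>\<omega>. fst (yule_chain lam \<omega> n)) \<in> borel_measurable yule_space" for n
    using chain by blast
  define index where "index \<omega> = (LEAST n. t < fst (yule_chain lam \<omega> (Suc n)))" for \<omega>
  have index: "index \<in> measurable yule_space (count_space UNIV)" unfolding index_def by measurable
  have [measurable]: "(\<lambda>\<omega>. yule_defined lam \<omega> t) \<in> measurable yule_space (count_space UNIV)"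
    unfolding yule_defined_def by measurable
  define F where "F n \<omega> = (\<Sum>i<2 + n. t - fst (snd (yule_chain lam \<omega> n)) ! i)" for n \<omega>
  have "(\<lambda>\<omega>. F (index \<omega>) \<omega>) \<in> borel_measurable yule_space"
  proof (rule measurable_compose_countable'[OF _ index])
    show "(\<lambda>\<omega>. F n \<omega>) \<in> borel_measurable yule_space" for n
      unfolding F_def by (intro borel_measurable_sum borel_measurable_diff borel_measurable_const)
        (use chain in auto)
  qed simp
  moreover have "pendant_sum lam \<omega> t = (if yule_defined lam \<omega> t then F (index \<omega>) \<omega> else 0)" for \<omega>
    using chain unfolding pendant_sum_def yule_at_def F_def index_def
    by (simp add: sum_list_sum_nth atLeast0LessThan)
  ultimately show "(\<lambda>\<omega>. pendant_sum lam \<omega> t) \<in> borel_measurable yule_space" by simp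
  have "(\<lambda>\<omega>. snd (snd (yule_chain lam \<omega> (index \<omega>)))) \<in> borel_measurable yule_space"
    by (rule measurable_compose_countable'[OF _ index]) (use chain in auto)
  moreover have "interior_sum lam \<omega> t = (if yule_defined lam \<omega> t then snd (snd (yule_chain lam \<omega> (index \<omega>))) else 0)" for \<omega>
    unfolding interior_sum_def yule_at_def index_def by simp
  ultimately show "(\<lambda>\<omega>. interior_sum lam \<omega> t) \<in> borel_measurable yule_space" by simp
qed

context yule_ode
begin

(* On a good sample path exactly one stop term is nonzero: that of the state at time t. *)
lemma sum_stop_terms:
  assumes good: "nonneg_waits \<omega>"
  shows "(\<Sum>j. stop_term initial_state \<omega> j) = ennreal (if yule_defined lam \<omega> t then X (yule_at lam \<omega> t) else 0)"
proof -
  define T where "T n = fst (yule_chain lam \<omega> n)" for n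
  have mono: "T m \<le> T n" if "m \<le> n" for m n
    using clamped_chain_time_mono[OF valid_initial lam_pos that, of \<omega>] clamped_chain_eq_yule_chain[OF good]
    by (simp add: T_def)
  have stop: "stop_term initial_state \<omega> j = ennreal (if T j \<le> t \<and> t < T (Suc j) then X (yule_chain lam \<omega> j) else 0)" for j
    by (simp only: stop_term_def T_def clamped_chain_eq_yule_chain[OF good])
  show ?thesis
  proof (cases "yule_defined lam \<omega> t")
    case True
    define m where "m = (LEAST n. t < T (Suc n))"
    have at: "yule_at lam \<omega> t = yule_chain lam \<omega> m" and bracket: "T m \<le> t" "t < T (Suc m)"
      using yule_at_bracket[OF t_nonneg True] by (simp_all add: m_def T_def)
    have "T j \<le> t \<and> t < T (Suc j) \<longleftrightarrow> j = m" for j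
    proof
      assume j: "T j \<le> t \<and> t < T (Suc j)"
      have "\<not> m < j" using mono[of "Suc m" j] j bracket by auto
      moreover have "\<not> j < m" using mono[of "Suc j" m] j bracket by auto
      ultimately show "j = m" by simp
    qed (use bracket in simp)
    then have "stop_term initial_state \<omega> = (\<lambda>j. if j = m then ennreal (X (yule_chain lam \<omega> m)) else 0)"
      by (intro ext) (simp add: stop)
    then show ?thesis
      using True sums_single[of m "\<lambda>_. ennreal (X (yule_chain lam \<omega> m))"] by (simp add: sums_iff at)
  next
    case False
    then have "stop_term initial_state \<omega> = (\<lambda>j. 0)"
      by (intro ext) (simp add: stop yule_defined_def T_def)
    then show ?thesis using False by simp
  qed
qed

lemma valid_yule_at:
  assumes "nonneg_waits \<omega>" "yule_defined lam \<omega> t"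
  shows "valid_state (yule_at lam \<omega> t)"
  using yule_at_bracket(1)[OF t_nonneg assms(2)] valid_clamped_chain[OF valid_initial lam_pos]
    clamped_chain_eq_yule_chain[OF assms(1)] by metis

lemma expectation_at_horizon:
  assumes f: "\<And>\<omega>. nonneg_waits \<omega> \<Longrightarrow> f \<omega> = (if yule_defined lam \<omega> t then X (yule_at lam \<omega> t) else 0)"
    and measurable: "f \<in> borel_measurable yule_space"
  shows "(\<integral>\<omega>. f \<omega> \<partial>yule_space) = V initial_state"
proof -
  have nonneg: "AE \<omega> in yule_space. 0 \<le> f \<omega>"
    using AE_nonneg_waits
    by eventually_elim
       (auto simp: f intro!: X_nonneg valid_yule_at yule_at_bracket(2)[OF t_nonneg])
  have "(\<integral>\<^sup>+\<omega>. ennreal (f \<omega>) \<partial>yule_space) = (\<integral>\<^sup>+\<omega>. (\<Sum>j. stop_term initial_state \<omega> j) \<partial>yule_space)"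
    using AE_nonneg_waits by (intro nn_integral_cong_AE) (auto elim!: eventually_mono simp: sum_stop_terms f)
  also have "\<dots> = ennreal (V initial_state)" by (rule integral_stop_terms)
  finally have "(\<integral>\<^sup>+\<omega>. ennreal (f \<omega>) \<partial>yule_space) = ennreal (V initial_state)" .
  moreover have "0 \<le> V initial_state"
    using valid_initial t_nonneg by (intro V_nonneg) (simp_all add: initial_state_def)
  ultimately show ?thesis using integral_eq_nn_integral[OF measurable nonneg] by simp
qed

lemma V_initial_state: "V initial_state = 2 * a t"
  by (simp add: V_def total_age_def initial_state_def)

end

lemma yule_I_formula:
  assumes lam: "0 < lam" and t: "0 \<le> t"
  shows "yule_I lam t = (exp (lam * t) + exp (- lam * t) - 2) / lam"
proof -
  interpret yule_ode lam t 1 "\<lambda>u. (exp (lam * u) + exp (- (lam * u)) - 2) / (2 * lam)"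
    "\<lambda>u. 1 - exp (- (lam * u))" "\<lambda>u. (exp (lam * u) - exp (- (lam * u))) / 2" "\<lambda>u. lam * exp (- (lam * u))"
  proof
    show "((\<lambda>u. (exp (lam * u) + exp (- (lam * u)) - 2) / (2 * lam)) has_real_derivative
        (exp (lam * u) - exp (- (lam * u))) / 2) (at u)" for u
      using lam by (auto intro!: derivative_eq_intros simp: field_simps)
    show "0 \<le> (exp (lam * u) + exp (- (lam * u)) - 2) / (2 * lam)" for u
    proof -
      have "1 + lam * u \<le> exp (lam * u)" "1 + - (lam * u) \<le> exp (- (lam * u))"
        by (rule exp_ge_add_one_self)+
      then have "0 \<le> exp (lam * u) + exp (- (lam * u)) - 2" by linarith
      then show ?thesis using lam by simp
    qed
    show "0 \<le> 1 - exp (- (lam * u))" if "0 \<le> u" for u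
      using that lam by simp
  qed (use lam t in \<open>auto intro!: derivative_eq_intros simp: field_simps\<close>)
  have "yule_I lam t = V initial_state"
    unfolding yule_I_def
    by (rule expectation_at_horizon[OF _ measurable_yule_sums(2)]) (simp add: interior_sum_def X_def)
  then show ?thesis using lam unfolding V_initial_state by (simp add: field_simps)
qed

lemma yule_P_formula:
  assumes lam: "0 < lam" and t: "0 \<le> t"
  shows "yule_P lam t = (exp (lam * t) - exp (- lam * t)) / lam"
proof -
  interpret yule_ode lam t 0 "\<lambda>u. (exp (lam * u) - exp (- (lam * u))) / (2 * lam)"
    "\<lambda>u. exp (- (lam * u))" "\<lambda>u. (exp (lam * u) + exp (- (lam * u))) / 2" "\<lambda>u. - lam * exp (- (lam * u))"
  proof
    show "((\<lambda>u. (exp (lam * u) - exp (- (lam * u))) / (2 * lam)) has_real_derivative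
        (exp (lam * u) + exp (- (lam * u))) / 2) (at u)" for u
      using lam by (auto intro!: derivative_eq_intros simp: field_simps)
    show "0 \<le> (exp (lam * u) - exp (- (lam * u))) / (2 * lam)" if "0 \<le> u" for u
      using lam that by (simp add: mult_nonneg_nonneg)
  qed (use lam t in \<open>auto intro!: derivative_eq_intros simp: field_simps\<close>)
  have "yule_P lam t = V initial_state"
    unfolding yule_P_def
    by (rule expectation_at_horizon[OF _ measurable_yule_sums(1)]) (simp add: pendant_sum_def X_def total_age_def)
  then show ?thesis using lam unfolding V_initial_state by (simp add: field_simps)
qed

(* With x = exp (lam t), p / i = ((x - 1/x) / (2 x)) / ((x + 1/x - 2) / (2 x - 2)) = 1 + 1/x. *)
lemma yule_ratio:
  assumes lam: "0 < lam" and t: "0 < t"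
  shows "yule_p lam t / yule_i lam t = 1 + exp (- lam * t)"
proof -
  define x where "x = exp (lam * t)"
  have x: "1 < x" using lam t by (simp add: x_def)
  have inv: "exp (- (lam * t)) = 1 / x" by (simp add: x_def exp_minus field_simps)
  have p: "yule_p lam t = (x - 1 / x) / lam / (2 * x)"
    using yule_P_formula[OF lam] t by (simp add: yule_p_def inv x_def[symmetric])
  have i: "yule_i lam t = (x - 1) / (2 * x * lam)"
  proof -
    have "yule_i lam t = (x + 1 / x - 2) / lam / (2 * x - 2)"
      using yule_I_formula[OF lam] t by (simp add: yule_i_def inv x_def[symmetric])
    also have "x + 1 / x - 2 = (x - 1) * (2 * x - 2) / (2 * x)" using x by (simp add: field_simps)
    also have "(x - 1) * (2 * x - 2) / (2 * x) / lam / (2 * x - 2) = (x - 1) / (2 * x * lam)"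
      using x lam by (simp add: field_simps)
    finally show ?thesis .
  qed
  have "(x - 1 / x) / lam / (2 * x) / ((x - 1) / (2 * x * lam)) = 1 + 1 / x"
    using x lam by (simp add: field_simps)
  then show ?thesis using p i inv by simp
qed

theorem theorem4:
  fixes lam :: real
  assumes "lam > 0"
  shows "(\<forall>t\<ge>0. yule_I lam t = (exp (lam * t) + exp (- lam * t) - 2) / lam
                 \<and> yule_P lam t = (exp (lam * t) - exp (- lam * t)) / lam)
         \<and> (\<exists>C c. C > 0 \<and> c > 0 \<and>
              (\<forall>t>0. \<bar>yule_p lam t / yule_i lam t - 1\<bar> \<le> C * exp (- c * t)))"
proof -
  have "\<forall>t\<ge>0. yule_I lam t = (exp (lam * t) + exp (- lam * t) - 2) / lam
                 \<and> yule_P lam t = (exp (lam * t) - exp (- lam * t)) / lam"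
    using yule_I_formula[OF assms] yule_P_formula[OF assms] by simp
  moreover have "\<forall>t>0. \<bar>yule_p lam t / yule_i lam t - 1\<bar> \<le> 1 * exp (- lam * t)"
    using yule_ratio[OF assms] by simp
  ultimately show ?thesis using assms by (intro conjI exI[of _ "1::real"] exI[of _ lam]) simp_all
qed
end
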